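(* Let $R$ be a ranking profile over $m$ candidates and $\rhd$ the ranking chosen by the Proportional Sequential Borda rule for $R$. Then for every subprofile $S$ of $R$ with $|S|>0$, $$\frac{1}{|S|}\sum_{\succ\in\mathcal{R}}S(\succ)\,u(\succ,\rhd)\geq\binom{m}{2}\frac{|S|}{4}-\frac{3}{16}.$$
   Context: Let $C$ be a set of $m$ candidates. A ranking is a strict linear order over $C$; $\mathcal{R}$ denotes the set of all rankings over $C$. A ranking profile is a function $R:\mathcal{R}\to[0,1]$ with $\sum_{\succ}R(\succ)=1$. A subprofile of $R$ is a function $S:\mathcal{R}\to[0,1]$ with $S(\succ)\leq R(\succ)$ for all $\succ$; $|S|=\sum_{\succ}S(\succ)$. For rankings $\succ,\rhd$, $u(\succ,\rhd)=|\{(x,y)\in C^2: x\succ y\text{ and }x\rhd y\}|$; for $x\in X\subseteq C$, $u(\succ,x,X)=|\{y\in X\setminus\{x\}: x\succ y\}|$; for $b:\mathcal{R}\to\mathbb{R}_{\geq0}$, $U(b,x,X)=\sum_{\succ}b(\succ)u(\succ,x,X)$. Proportional Sequential Borda rule: set $X_1=C$, $b_1(\succ)=R(\succ)\binom{m}{2}$. For $i=1,\dots,m$: choose $x^*\in\arg\max_{x\in X_i}U(b_i,x,X_i)$ (ties broken arbitrarily), place $x^*$ at position $i$, set $X_{i+1}=X_i\setminus\{x^*\}$ and $b_{i+1}(\succ)=b_i(\succ)-\min\!\big(\frac{(m-i)u(\succ,x^*,X_i)b_i(\succ)}{U(b_i,x^*,X_i)},b_i(\succ)\big)$ (convention $0/0=0$).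 *)

theory Defs
  imports Complex_Main
begin

text \<open>Candidates form a finite set C. A ranking (strict linear order over C) is
represented by the list of the candidates from best to worst.\<close>

definition rankings :: "'a set \<Rightarrow> 'a list set" where
  "rankings C = {xs. distinct xs \<and> set xs = C}"

definition prefers :: "'a list \<Rightarrow> 'a \<Rightarrow> 'a \<Rightarrow> bool" where
  "prefers r x y \<longleftrightarrow> (\<exists>i j. i < j \<and> j < length r \<and> r ! i = x \<and> r ! j = y)"

definition is_profile :: "'a set \<Rightarrow> ('a list \<Rightarrow> real) \<Rightarrow> bool" where
  "is_profile C R \<longleftrightarrow> (\<forall>r\<in>rankings C. 0 \<le> R r \<and> R r \<le> 1) \<and> (\<Sum>r\<in>rankings C. R r) = 1"

definition is_subprofile :: "'a set \<Rightarrow> ('a list \<Rightarrow> real) \<Rightarrow> ('a list \<Rightarrow> real) \<Rightarrow> bool" where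
  "is_subprofile C R S \<longleftrightarrow> (\<forall>r\<in>rankings C. 0 \<le> S r \<and> S r \<le> R r)"

definition psize :: "'a set \<Rightarrow> ('a list \<Rightarrow> real) \<Rightarrow> real" where
  "psize C S = (\<Sum>r\<in>rankings C. S r)"

definition agree :: "'a set \<Rightarrow> 'a list \<Rightarrow> 'a list \<Rightarrow> nat" where
  "agree C r t = card {(x, y) \<in> C \<times> C. prefers r x y \<and> prefers t x y}"

definition uX :: "'a list \<Rightarrow> 'a \<Rightarrow> 'a set \<Rightarrow> nat" where
  "uX r x X = card {y \<in> X - {x}. prefers r x y}"

definition UX :: "'a set \<Rightarrow> ('a list \<Rightarrow> real) \<Rightarrow> 'a \<Rightarrow> 'a set \<Rightarrow> real" where
  "UX C b x X = (\<Sum>r\<in>rankings C. b r * real (uX r x X))"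

definition psb_update :: "'a set \<Rightarrow> ('a list \<Rightarrow> real) \<Rightarrow> nat \<Rightarrow> 'a \<Rightarrow> 'a set \<Rightarrow> ('a list \<Rightarrow> real)" where
  "psb_update C b i x X = (\<lambda>r. b r - min ((real (card C) - real i) * real (uX r x X) * b r / UX C b x X) (b r))"

text \<open>psb_run C b i X t: the list t is a possible (arbitrary tie-breaking) continuation of the
Proportional Sequential Borda rule, starting at position i with remaining candidates X and
budgets b.  Division by zero yields 0 in Isabelle, matching the convention 0/0 = 0.\<close>
fun psb_run :: "'a set \<Rightarrow> ('a list \<Rightarrow> real) \<Rightarrow> nat \<Rightarrow> 'a set \<Rightarrow> 'a list \<Rightarrow> bool" where
  "psb_run C b i X [] \<longleftrightarrow> X = {}"
| "psb_run C b i X (x # xs) \<longleftrightarrow>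
     x \<in> X \<and> (\<forall>y\<in>X. UX C b y X \<le> UX C b x X) \<and>
     psb_run C (psb_update C b i x X) (Suc i) (X - {x}) xs"

definition psb_outcome :: "'a set \<Rightarrow> ('a list \<Rightarrow> real) \<Rightarrow> 'a list \<Rightarrow> bool" where
  "psb_outcome C R t \<longleftrightarrow> psb_run C (\<lambda>r. R r * real (card C choose 2)) 1 C t"

end

theory Submission
  imports Defs
begin

text \<open>Each ranking r starts with budget K R(r), K = C(m,2), and pays for every placed candidate x
  in proportion to its utility u(r,x,X).  Let M be the part of the budgets owned by the subprofile
  S, i.e. the sum of S(r) b(r) / R(r).  Because x maximises U, its score with respect to these
  smaller budgets is still at least k M / 2 (k = |X| - 1), so per unit of utility gained by S the
  potential M^2 drops by at most 4 K.  It starts at (K |S|)^2, and since a total budget of at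
  most 3/4 is left at the end, it ends at most at 3/4 K |S|.  Hence
  (K |S|)^2 - 3/4 K |S| \<le> 4 K \<Sum> S(r) u(r,t).\<close>

lemma prefers_Nil [simp]: "\<not> prefers [] a b"
  by (simp add: prefers_def)

lemma prefers_Cons: "prefers (x # xs) a b \<longleftrightarrow> (a = x \<and> b \<in> set xs) \<or> prefers xs a b"
proof
  assume "prefers (x # xs) a b"
  then obtain i j where ij: "i < j" "j < length (x # xs)" "(x # xs) ! i = a" "(x # xs) ! j = b"
    unfolding prefers_def by blast
  then obtain j' where j: "j = Suc j'" by (cases j) auto
  show "(a = x \<and> b \<in> set xs) \<or> prefers xs a b"
  proof (cases i)
    case 0
    then show ?thesis using ij j by auto
  next
    case (Suc i')
    then have "prefers xs a b" unfolding prefers_def using ij j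
      by (intro exI[of _ i'] exI[of _ j']) auto
    then show ?thesis ..
  qed
next
  assume "(a = x \<and> b \<in> set xs) \<or> prefers xs a b"
  then show "prefers (x # xs) a b"
  proof
    assume "a = x \<and> b \<in> set xs"
    then obtain j where "j < length xs" "xs ! j = b" "a = x" by (auto simp: in_set_conv_nth)
    then show ?thesis unfolding prefers_def by (intro exI[of _ 0] exI[of _ "Suc j"]) auto
  next
    assume "prefers xs a b"
    then obtain i j where "i < j" "j < length xs" "xs ! i = a" "xs ! j = b"
      unfolding prefers_def by blast
    then show ?thesis unfolding prefers_def by (intro exI[of _ "Suc i"] exI[of _ "Suc j"]) auto
  qed
qed

lemma prefers_in_set: "prefers r a b \<Longrightarrow> a \<in> set r \<and> b \<in> set r"
  by (induction r) (auto simp: prefers_Cons)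

lemma prefers_total:
  "distinct r \<Longrightarrow> a \<in> set r \<Longrightarrow> b \<in> set r \<Longrightarrow> a \<noteq> b \<Longrightarrow> prefers r a b \<or> prefers r b a"
  by (induction r) (auto simp: prefers_Cons)

lemma prefers_asym: "distinct r \<Longrightarrow> prefers r a b \<Longrightarrow> \<not> prefers r b a"
  by (induction r) (auto simp: prefers_Cons dest: prefers_in_set)

lemma agree_empty [simp]: "agree {} r t = 0"
  by (simp add: agree_def)

lemma agree_Cons:
  assumes "x \<notin> set xs"
  shows "agree (insert x (set xs)) r (x # xs) = uX r x (insert x (set xs)) + agree (set xs) r xs"
proof -
  let ?X = "set xs"
  let ?head = "Pair x ` {c \<in> ?X. prefers r x c}"
    and ?tail = "{(a, c) \<in> ?X \<times> ?X. prefers r a c \<and> prefers xs a c}"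
  have "{(a, c) \<in> insert x ?X \<times> insert x ?X. prefers r a c \<and> prefers (x # xs) a c}
      = ?head \<union> ?tail"
    by (auto simp: prefers_Cons dest: prefers_in_set)
  moreover have "card (?head \<union> ?tail) = card ?head + card ?tail"
    by (rule card_Un_disjoint) (use assms in \<open>auto intro: finite_subset[of _ "?X \<times> ?X"]\<close>)
  moreover have "card ?head = uX r x (insert x ?X)"
    unfolding uX_def using assms
    by (subst card_image) (auto simp: inj_on_def intro!: arg_cong[where f = card])
  ultimately show ?thesis
    unfolding agree_def by simp
qed

lemma psb_run_distinct_set: "psb_run C b i X t \<Longrightarrow> distinct t \<and> set t = X"
  by (induction t arbitrary: b i X) auto

lemma real_choose_two: "real (n choose 2) = real n * (real n - 1) / 2"
  by (induction n) (auto simp: numeral_2_eq_2 field_simps)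

lemma uX_less_card: "finite X \<Longrightarrow> x \<in> X \<Longrightarrow> uX r x X < card X"
  unfolding uX_def by (rule psubset_card_mono) auto

lemma real_card_minus_one_nonneg: "finite X \<Longrightarrow> x \<in> X \<Longrightarrow> 0 \<le> real (card X) - 1"
  by (auto simp: Suc_le_eq card_gt_0_iff)

lemma sum_uX:
  assumes "distinct r" "finite X" "X \<subseteq> set r"
  shows "(\<Sum>y\<in>X. real (uX r y X)) = real (card X) * (real (card X) - 1) / 2"
  using assms(2,3)
proof (induction X rule: finite_induct)
  case empty
  then show ?case by simp
next
  case (insert a X)
  have a: "a \<in> set r" and X: "X \<subseteq> set r" using insert by auto
  have ua: "uX r a (insert a X) = card {z \<in> X. prefers r a z}"
    unfolding uX_def using insert by (intro arg_cong[where f = card]) auto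
  have uy: "real (uX r y (insert a X)) = real (uX r y X) + (if prefers r y a then 1 else 0)"
    if "y \<in> X" for y
  proof -
    have "{z \<in> insert a X - {y}. prefers r y z}
        = (if prefers r y a then insert a else id) {z \<in> X - {y}. prefers r y z}"
      using that insert.hyps(2) by auto
    then show ?thesis unfolding uX_def using insert.hyps by (simp add: card_insert_if)
  qed
  have "card {z \<in> X. prefers r a z} + card {y \<in> X. prefers r y a} = card X"
  proof -
    have "{z \<in> X. prefers r a z} \<union> {y \<in> X. prefers r y a} = X"
      using prefers_total[OF assms(1) a] X insert.hyps(2) by blast
    moreover have "{z \<in> X. prefers r a z} \<inter> {y \<in> X. prefers r y a} = {}"
      using prefers_asym[OF assms(1)] by blast
    ultimately show ?thesis
      using card_Un_disjoint[of "{z \<in> X. prefers r a z}" "{y \<in> X. prefers r y a}"] insert.hyps(1)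
      by simp
  qed
  moreover have "(\<Sum>y\<in>X. real (uX r y (insert a X)))
      = (\<Sum>y\<in>X. real (uX r y X)) + real (card {y \<in> X. prefers r y a})"
    using insert.hyps(1) by (simp add: uy sum.distrib sum.If_cases Int_def conj_commute)
  ultimately have "(\<Sum>y\<in>insert a X. real (uX r y (insert a X)))
      = real (card X) + real (card X) * (real (card X) - 1) / 2"
    using insert ua by (simp add: of_nat_add[symmetric] del: of_nat_add)
  then show ?case using insert.hyps by (simp add: field_simps)
qed

text \<open>Every ranking distributes C(|X|,2) points among X, so the left-hand side is the average
  score of the candidates with respect to the smaller budgets w.\<close>

lemma UX_max_ge_average:
  assumes "finite X" "X \<subseteq> C" "x \<in> X"
    and w: "\<forall>r\<in>rankings C. 0 \<le> w r \<and> w r \<le> b r"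
    and x_max: "\<forall>y\<in>X. UX C b y X \<le> UX C b x X"
  shows "psize C w * (real (card X) - 1) / 2 \<le> UX C b x X"
proof -
  let ?n = "real (card X)"
  have "psize C w * (?n * (?n - 1) / 2) = (\<Sum>r\<in>rankings C. w r * (\<Sum>y\<in>X. real (uX r y X)))"
    unfolding psize_def sum_distrib_right
  proof (intro sum.cong refl)
    fix r assume "r \<in> rankings C"
    then show "w r * (?n * (?n - 1) / 2) = w r * (\<Sum>y\<in>X. real (uX r y X))"
      using sum_uX[of r X] assms(1,2) by (simp add: rankings_def)
  qed
  also have "\<dots> = (\<Sum>y\<in>X. UX C w y X)"
    unfolding UX_def by (simp add: sum_distrib_left sum.swap[of _ X])
  also have "\<dots> \<le> (\<Sum>y\<in>X. UX C b x X)"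
  proof (rule sum_mono)
    fix y assume "y \<in> X"
    have "UX C w y X \<le> UX C b y X"
      unfolding UX_def by (intro sum_mono mult_right_mono) (use w in auto)
    then show "UX C w y X \<le> UX C b x X" using x_max \<open>y \<in> X\<close> by auto
  qed
  finally have "?n * (psize C w * (?n - 1) / 2) \<le> ?n * UX C b x X"
    by (simp add: algebra_simps)
  moreover have "?n > 0" using assms(1,3) by (auto simp: card_gt_0_iff)
  ultimately show ?thesis by simp
qed

definition spend :: "'a set \<Rightarrow> real \<Rightarrow> ('a list \<Rightarrow> real) \<Rightarrow> 'a \<Rightarrow> 'a set \<Rightarrow> 'a list \<Rightarrow> real" where
  "spend C k b x X r = min (k * real (uX r x X) * b r / UX C b x X) (b r)"

lemma psb_update_eq_spend: "psb_update C b i x X r = b r - spend C (real (card C) - real i) b x X r"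
  by (simp add: psb_update_def spend_def)

lemma psb_run_Cons_spend:
  assumes "psb_run C b i X (x # xs)" "card X + i = card C + 1"
  shows "x \<in> X \<and> (\<forall>y\<in>X. UX C b y X \<le> UX C b x X)
    \<and> psb_run C (\<lambda>r. b r - spend C (real (card X) - 1) b x X r) (Suc i) (X - {x}) xs"
proof -
  have "real (card C) - real i = real (card X) - 1"
    using arg_cong[OF assms(2), of real] by simp
  then have "psb_update C b i x X = (\<lambda>r. b r - spend C (real (card X) - 1) b x X r)"
    by (simp add: fun_eq_iff psb_update_eq_spend)
  then show ?thesis using assms(1) by simp
qed

lemma UX_nonneg: "\<forall>r\<in>rankings C. 0 \<le> b r \<Longrightarrow> 0 \<le> UX C b x X"
  unfolding UX_def by (intro sum_nonneg) auto

lemma spend_bounds: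
  assumes "\<forall>r\<in>rankings C. 0 \<le> b r" "0 \<le> k" "r \<in> rankings C"
  shows "0 \<le> spend C k b x X r \<and> spend C k b x X r \<le> b r"
  using assms UX_nonneg[OF assms(1)] unfolding spend_def by simp

text \<open>Every ranking pays at least at the common rate min (k / U) (1 / k) per point of utility,
  and the points of utility add up to U.\<close>

lemma sum_spend_ge:
  assumes b: "\<forall>r\<in>rankings C. 0 \<le> b r" and "0 \<le> k"
    and u: "\<forall>r\<in>rankings C. real (uX r x X) \<le> k"
  shows "min k (UX C b x X / k) \<le> psize C (spend C k b x X)"
proof -
  let ?U = "UX C b x X"
  let ?c = "min (k / ?U) (1 / k)"
  have "min k (?U / k) = ?U * ?c"
    using UX_nonneg[OF b] \<open>0 \<le> k\<close> by (cases "?U = 0") (simp_all add: min_mult_distrib_left)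
  also have "\<dots> = (\<Sum>r\<in>rankings C. b r * real (uX r x X) * ?c)"
    unfolding UX_def by (simp add: sum_distrib_right)
  also have "\<dots> \<le> psize C (spend C k b x X)"
    unfolding psize_def
  proof (rule sum_mono)
    fix r assume r: "r \<in> rankings C"
    have "b r * real (uX r x X) * ?c \<le> b r * real (uX r x X) * (k / ?U)"
      using b r by (intro mult_left_mono) auto
    moreover have "b r * real (uX r x X) * ?c \<le> b r * (real (uX r x X) / k)"
      using mult_left_mono[OF min.cobounded2, of "b r * real (uX r x X)" "k / ?U" "1 / k"] b r
      by simp
    moreover have "real (uX r x X) / k \<le> 1"
      using u r \<open>0 \<le> k\<close> by (cases "k = 0") (auto simp: divide_le_eq)
    then have "b r * (real (uX r x X) / k) \<le> b r"
      using b r by (intro mult_left_le) auto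
    ultimately show "b r * real (uX r x X) * ?c \<le> spend C k b x X r"
      unfolding spend_def by (simp add: mult_ac)
  qed
  finally show ?thesis .
qed

text \<open>A round spends at least min (n - 1) (B / 2) of the total budget B.  For n \<ge> 4 this
  keeps B below the number C(n,2) of remaining pairs; the last rounds can only guarantee the
  bounds 3/2 and 3/4, and the final 3/4 is the source of the 3/16 in the theorem.\<close>

definition budget_bound :: "nat \<Rightarrow> real" where
  "budget_bound n = (if 3 \<le> n then real (n choose 2) else if n = 2 then 3 / 2 else 3 / 4)"

lemma choose_two_le_budget_bound: "real (n choose 2) \<le> budget_bound n"
proof -
  consider "n < 2" | "n = 2" | "3 \<le> n" by linarith
  then show ?thesis by cases (simp_all add: budget_bound_def binomial_eq_0)
qed

lemma budget_bound_step:
  assumes "1 \<le> n" "B \<le> budget_bound n"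
  shows "B - min (real n - 1) (B / 2) \<le> budget_bound (n - 1)"
proof -
  consider "n = 1" | "n = 2" | "n = 3" | "4 \<le> n" using assms(1) by linarith
  then show ?thesis
  proof cases
    case 4
    then have "3 \<le> n - 1" by simp
    have bound_n: "budget_bound n = real n * (real n - 1) / 2"
      and bound_pred: "budget_bound (n - 1) = (real n - 1) * (real n - 2) / 2"
      using 4 \<open>3 \<le> n - 1\<close> by (simp_all add: budget_bound_def real_choose_two of_nat_diff)
    have "0 \<le> (real n - 1) * (real n - 4)" using 4 by simp
    then have "B / 2 \<le> budget_bound (n - 1)"
      using assms(2) unfolding bound_n bound_pred by (simp add: algebra_simps)
    moreover have "B - (real n - 1) \<le> budget_bound (n - 1)"
      using assms(2) unfolding bound_n bound_pred by (simp add: algebra_simps)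
    ultimately show ?thesis by (simp add: min_def)
  qed (use assms(2) in \<open>simp_all add: budget_bound_def real_choose_two\<close>)
qed

text \<open>S owns the fraction S r / R r of ranking r's budget.  Where R r = 0 we also have S r = 0,
  so the junk value of the division does no harm.\<close>

definition sub_budget :: "('a list \<Rightarrow> real) \<Rightarrow> ('a list \<Rightarrow> real) \<Rightarrow> ('a list \<Rightarrow> real) \<Rightarrow> 'a list \<Rightarrow> real" where
  "sub_budget R S b r = S r * b r / R r"

lemma sub_budget_bounds:
  assumes "0 \<le> S r" "S r \<le> R r" "0 \<le> b r" "b r \<le> K * R r"
  shows "0 \<le> sub_budget R S b r \<and> sub_budget R S b r \<le> b r \<and> sub_budget R S b r \<le> K * S r"
proof (cases "R r = 0")
  case False
  then have "R r > 0" using assms by linarith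
  moreover have "S r * b r \<le> R r * b r" "S r * b r \<le> S r * (K * R r)"
    using assms by (simp_all add: mult_right_mono mult_left_mono)
  ultimately show ?thesis
    using assms unfolding sub_budget_def by (simp add: divide_le_eq mult_ac)
qed (use assms in \<open>simp add: sub_budget_def\<close>)

lemma psize_sub_budget_bounds:
  assumes "is_subprofile C R S" "\<forall>r\<in>rankings C. 0 \<le> b r \<and> b r \<le> K * R r"
  shows "0 \<le> psize C (sub_budget R S b) \<and> psize C (sub_budget R S b) \<le> psize C b
    \<and> psize C (sub_budget R S b) \<le> K * psize C S"
proof -
  have "0 \<le> sub_budget R S b r \<and> sub_budget R S b r \<le> b r \<and> sub_budget R S b r \<le> K * S r"
    if "r \<in> rankings C" for r
    using sub_budget_bounds[of S r R b K] assms that by (auto simp: is_subprofile_def)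
  then show ?thesis
    unfolding psize_def sum_distrib_left by (auto intro: sum_nonneg sum_mono)
qed

lemma psize_sub_budget_initial:
  assumes "is_subprofile C R S"
  shows "psize C (sub_budget R S (\<lambda>r. R r * K)) = K * psize C S"
  unfolding psize_def sum_distrib_left sub_budget_def
proof (intro sum.cong refl)
  fix r assume "r \<in> rankings C"
  then have "R r = 0 \<Longrightarrow> S r = 0" using assms by (force simp: is_subprofile_def)
  then show "S r * (R r * K) / R r = K * S r" by (cases "R r = 0") auto
qed

context
  fixes C X :: "'a set" and x :: 'a and b :: "'a list \<Rightarrow> real"
  assumes finite_X: "finite X" and X_sub: "X \<subseteq> C" and x_in: "x \<in> X"
    and b_nonneg: "\<forall>r\<in>rankings C. 0 \<le> b r"
    and x_max: "\<forall>y\<in>X. UX C b y X \<le> UX C b x X"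
begin

lemma budget_bounds_after_round:
  assumes "\<forall>r\<in>rankings C. b r \<le> K * R r"
  shows "\<forall>r\<in>rankings C. 0 \<le> b r - spend C (real (card X) - 1) b x X r
    \<and> b r - spend C (real (card X) - 1) b x X r \<le> K * R r"
proof
  fix r assume r: "r \<in> rankings C"
  have "0 \<le> spend C (real (card X) - 1) b x X r \<and> spend C (real (card X) - 1) b x X r \<le> b r"
    by (rule spend_bounds[OF b_nonneg real_card_minus_one_nonneg[OF finite_X x_in] r])
  then show "0 \<le> b r - spend C (real (card X) - 1) b x X r
      \<and> b r - spend C (real (card X) - 1) b x X r \<le> K * R r"
    using assms r by fastforce
qed

lemma budget_after_round:
  assumes "psize C b \<le> budget_bound (card X)"
  shows "psize C (\<lambda>r. b r - spend C (real (card X) - 1) b x X r) \<le> budget_bound (card X - 1)"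
proof -
  let ?k = "real (card X) - 1" and ?B = "psize C b" and ?U = "UX C b x X"
  have "min ?k (?B / 2) \<le> min ?k (?U / ?k)"
  proof (cases "?k = 0")
    case True
    have "0 \<le> ?B"
      unfolding psize_def using b_nonneg by (intro sum_nonneg) auto
    then show ?thesis using True by simp
  next
    case False
    have "?B * ?k / 2 \<le> ?U"
      using UX_max_ge_average[OF finite_X X_sub x_in _ x_max, of b] b_nonneg by simp
    then have "?B / 2 \<le> ?U / ?k"
      using False real_card_minus_one_nonneg[OF finite_X x_in] by (simp add: le_divide_eq mult_ac)
    then show ?thesis by (simp add: min.coboundedI2)
  qed
  also have "\<dots> \<le> psize C (spend C ?k b x X)"
  proof (rule sum_spend_ge[OF b_nonneg real_card_minus_one_nonneg[OF finite_X x_in]], intro ballI)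
    show "real (uX r x X) \<le> ?k" for r
      using uX_less_card[OF finite_X x_in, of r] by linarith
  qed
  finally have "psize C (\<lambda>r. b r - spend C ?k b x X r) \<le> ?B - min ?k (?B / 2)"
    unfolding psize_def sum_subtractf by simp
  also have "\<dots> \<le> budget_bound (card X - 1)"
    using budget_bound_step[OF _ assms] finite_X x_in by (auto simp: Suc_le_eq card_gt_0_iff)
  finally show ?thesis .
qed

lemma sub_budget_decrease:
  assumes S: "\<forall>r\<in>rankings C. 0 \<le> S r \<and> S r \<le> R r"
    and b_le: "\<forall>r\<in>rankings C. b r \<le> K * R r"
  shows "psize C (sub_budget R S b)
      - psize C (sub_budget R S (\<lambda>r. b r - spend C (real (card X) - 1) b x X r))
    \<le> (real (card X) - 1) / UX C b x X * K * (\<Sum>r\<in>rankings C. S r * real (uX r x X))"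
    (is "?M - ?M' \<le> ?k / ?U * K * ?g")
proof -
  have "?M - ?M' = psize C (sub_budget R S (spend C ?k b x X))"
    unfolding psize_def sub_budget_def sum_subtractf[symmetric]
    by (intro sum.cong refl) (simp add: diff_divide_distrib right_diff_distrib)
  also have "\<dots> \<le> (\<Sum>r\<in>rankings C. ?k / ?U * (real (uX r x X) * sub_budget R S b r))"
    unfolding psize_def
  proof (rule sum_mono)
    fix r assume "r \<in> rankings C"
    then have "0 \<le> S r" "0 \<le> R r" using S by auto
    then have "S r * spend C ?k b x X r / R r \<le> S r * (?k * real (uX r x X) * b r / ?U) / R r"
      unfolding spend_def by (intro divide_right_mono mult_left_mono) auto
    then show "sub_budget R S (spend C ?k b x X) r
        \<le> ?k / ?U * (real (uX r x X) * sub_budget R S b r)"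
      by (simp add: sub_budget_def mult_ac)
  qed
  also have "\<dots> \<le> (\<Sum>r\<in>rankings C. ?k / ?U * (real (uX r x X) * (K * S r)))"
  proof (intro sum_mono mult_left_mono)
    fix r assume "r \<in> rankings C"
    then show "sub_budget R S b r \<le> K * S r"
      using sub_budget_bounds[of S r R b K] S b_nonneg b_le by simp
  qed (use real_card_minus_one_nonneg[OF finite_X x_in] UX_nonneg[OF b_nonneg] in auto)
  also have "\<dots> = ?k / ?U * K * ?g"
    by (simp add: sum_distrib_left sum_divide_distrib mult_ac)
  finally show ?thesis .
qed

text \<open>The chosen candidate scores at least k M / 2 with respect to the sub-budgets, so per unit
  of utility the subprofile pays at most 2 K / M.\<close>

lemma sub_budget_loss:
  assumes S: "\<forall>r\<in>rankings C. 0 \<le> S r \<and> S r \<le> R r"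
    and b_le: "\<forall>r\<in>rankings C. b r \<le> K * R r" and "0 \<le> K"
  defines "M \<equiv> psize C (sub_budget R S b)"
    and "M' \<equiv> psize C (sub_budget R S (\<lambda>r. b r - spend C (real (card X) - 1) b x X r))"
  shows "(M - M') * M \<le> 2 * K * (\<Sum>r\<in>rankings C. S r * real (uX r x X))"
proof -
  let ?k = "real (card X) - 1" and ?U = "UX C b x X"
  let ?g = "\<Sum>r\<in>rankings C. S r * real (uX r x X)"
  have w: "0 \<le> sub_budget R S b r \<and> sub_budget R S b r \<le> b r"
    if "r \<in> rankings C" for r
    using sub_budget_bounds[of S r R b K] S b_nonneg b_le that by auto
  have "M * ?k / 2 \<le> ?U"
    unfolding M_def by (rule UX_max_ge_average[OF finite_X X_sub x_in _ x_max]) (use w in auto)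
  then have ratio: "?k / ?U * M \<le> 2"
    using UX_nonneg[OF b_nonneg, of x X] by (cases "?U = 0") (auto simp: field_simps)
  have "0 \<le> M" unfolding M_def psize_def using w by (intro sum_nonneg) auto
  have "0 \<le> ?g" using S by (intro sum_nonneg) auto
  have "M - M' \<le> ?k / ?U * K * ?g"
    unfolding M_def M'_def by (rule sub_budget_decrease[OF S b_le])
  then have "(M - M') * M \<le> (?k / ?U * K * ?g) * M"
    using \<open>0 \<le> M\<close> by (rule mult_right_mono)
  also have "\<dots> = (?k / ?U * M) * (K * ?g)" by (simp add: mult_ac)
  also have "\<dots> \<le> 2 * (K * ?g)"
    using ratio \<open>0 \<le> K\<close> \<open>0 \<le> ?g\<close> by (intro mult_right_mono) auto
  finally show ?thesis by (simp add: mult_ac)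
qed

end

lemma psb_run_sub_budget_bound:
  assumes "finite C" and sub: "is_subprofile C R S" and "0 \<le> K"
  shows "psb_run C b i X t \<Longrightarrow> X \<subseteq> C \<Longrightarrow> card X + i = card C + 1
    \<Longrightarrow> \<forall>r\<in>rankings C. 0 \<le> b r \<and> b r \<le> K * R r
    \<Longrightarrow> psize C b \<le> budget_bound (card X)
    \<Longrightarrow> (psize C (sub_budget R S b))^2 - 3 / 4 * K * psize C S
        \<le> 4 * K * (\<Sum>r\<in>rankings C. S r * real (agree X r t))"
proof (induction t arbitrary: b i X)
  case Nil
  let ?M = "psize C (sub_budget R S b)"
  have "0 \<le> ?M" "?M \<le> psize C b" "?M \<le> K * psize C S"
    using psize_sub_budget_bounds[OF sub Nil.prems(4)] by auto
  moreover have "psize C b \<le> 3 / 4" using Nil.prems(1,5) by (simp add: budget_bound_def)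
  ultimately have "?M * ?M \<le> 3 / 4 * (K * psize C S)"
    by (meson mult_mono order.trans)
  then show ?case using Nil.prems(1) by (simp add: power2_eq_square)
next
  case (Cons x xs)
  let ?k = "real (card X) - 1"
  let ?b' = "\<lambda>r. b r - spend C ?k b x X r"
  let ?M = "psize C (sub_budget R S b)" and ?M' = "psize C (sub_budget R S ?b')"
  have x_in: "x \<in> X" and x_max: "\<forall>y\<in>X. UX C b y X \<le> UX C b x X"
    and run: "psb_run C ?b' (Suc i) (X - {x}) xs"
    using psb_run_Cons_spend[OF Cons.prems(1,3)] by auto
  have finite_X: "finite X" using Cons.prems(2) \<open>finite C\<close> finite_subset by blast
  have b_nonneg: "\<forall>r\<in>rankings C. 0 \<le> b r" using Cons.prems(4) by auto
  have S: "\<forall>r\<in>rankings C. 0 \<le> S r \<and> S r \<le> R r" using sub by (simp add: is_subprofile_def)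
  have card_X: "card (X - {x}) = card X - 1" and "1 \<le> card X"
    using finite_X x_in by (auto simp: Suc_le_eq card_gt_0_iff)
  have IH: "?M'^2 - 3 / 4 * K * psize C S
      \<le> 4 * K * (\<Sum>r\<in>rankings C. S r * real (agree (X - {x}) r xs))"
  proof (rule Cons.IH[OF run])
    show "X - {x} \<subseteq> C" "card (X - {x}) + Suc i = card C + 1"
      using Cons.prems(2,3) card_X \<open>1 \<le> card X\<close> by auto
    show "\<forall>r\<in>rankings C. 0 \<le> ?b' r \<and> ?b' r \<le> K * R r"
      by (rule budget_bounds_after_round[OF finite_X Cons.prems(2) x_in b_nonneg x_max])
        (use Cons.prems(4) in auto)
    show "psize C ?b' \<le> budget_bound (card (X - {x}))"
      using budget_after_round[OF finite_X Cons.prems(2) x_in b_nonneg x_max Cons.prems(5)] card_X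
      by simp
  qed
  have loss: "(?M - ?M') * ?M \<le> 2 * K * (\<Sum>r\<in>rankings C. S r * real (uX r x X))"
    using sub_budget_loss[OF finite_X Cons.prems(2) x_in b_nonneg x_max S _ \<open>0 \<le> K\<close>] Cons.prems(4)
    by auto
  have "?M^2 - ?M'^2 = 2 * ((?M - ?M') * ?M) - (?M - ?M')^2"
    by (simp add: power2_eq_square algebra_simps)
  then have "?M^2 - ?M'^2 \<le> 2 * ((?M - ?M') * ?M)" by simp
  moreover have "agree X r (x # xs) = uX r x X + agree (X - {x}) r xs" for r
  proof -
    have "distinct xs" "set xs = X - {x}" using psb_run_distinct_set[OF run] by auto
    then show ?thesis using agree_Cons[of x xs r] x_in by (simp add: insert_absorb)
  qed
  ultimately show ?case
    using IH loss by (simp add: sum.distrib distrib_left)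
qed

lemma potential_bound_imp_average_bound:
  fixes K s A :: real
  assumes "0 \<le> K" "0 < s" "0 \<le> A" "(K * s)^2 - 3 / 4 * K * s \<le> 4 * K * A"
  shows "K * s / 4 - 3 / 16 \<le> A / s"
proof (cases "K = 0")
  case True
  have "0 \<le> A / s" using assms(2,3) by simp
  then show ?thesis using True by simp
next
  case False
  then have "K * (K * s * s) \<le> K * (4 * A + 3 / 4 * s)"
    using assms(4) by (simp add: power2_eq_square algebra_simps)
  then have "K * s * s \<le> 4 * A + 3 / 4 * s" using False assms(1) by simp
  then show ?thesis using assms(2) by (simp add: field_simps)
qed

theorem mainTheorem5:
  fixes C :: "'a set" and R S :: "'a list \<Rightarrow> real" and t :: "'a list"
  assumes "finite C"
    and "is_profile C R"
    and "psb_outcome C R t"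
    and "is_subprofile C R S"
    and "psize C S > 0"
  shows "(1 / psize C S) * (\<Sum>r\<in>rankings C. S r * real (agree C r t))
           \<ge> real (card C choose 2) * psize C S / 4 - 3 / 16"
proof -
  let ?K = "real (card C choose 2)"
  have R: "\<forall>r\<in>rankings C. 0 \<le> R r" "psize C R = 1"
    using assms(2) by (auto simp: is_profile_def psize_def)
  then have "psize C (\<lambda>r. R r * ?K) \<le> budget_bound (card C)"
    using choose_two_le_budget_bound by (simp add: psize_def sum_distrib_right[symmetric])
  then have "(psize C (sub_budget R S (\<lambda>r. R r * ?K)))^2 - 3 / 4 * ?K * psize C S
      \<le> 4 * ?K * (\<Sum>r\<in>rankings C. S r * real (agree C r t))"
    by (intro psb_run_sub_budget_bound[OF assms(1,4)])
      (use assms(3) R(1) in \<open>auto simp: psb_outcome_def\<close>)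
  then have "(?K * psize C S)^2 - 3 / 4 * ?K * psize C S
      \<le> 4 * ?K * (\<Sum>r\<in>rankings C. S r * real (agree C r t))"
    unfolding psize_sub_budget_initial[OF assms(4)] .
  moreover have "0 \<le> (\<Sum>r\<in>rankings C. S r * real (agree C r t))"
    using assms(4) by (intro sum_nonneg) (auto simp: is_subprofile_def)
  ultimately show ?thesis
    using potential_bound_imp_average_bound[OF _ assms(5)] by simp
qed

end
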